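(* Let $(V,\le,\preccurlyeq)$ be a mixed lattice vector space equipped with a vector topology $\tau$. The following are equivalent: (a) every neighborhood of zero contains a type 2 mixed-full neighborhood of zero; (b) every neighborhood of zero contains a neighborhood $W$ of zero such that $y\in W$ and $0\le x\preccurlyeq y$ imply $x\in W$; (c) every neighborhood of zero contains a type 1 mixed-full neighborhood of zero; (d) every neighborhood of zero contains a neighborhood $W$ of zero such that $y\in W$ and $0\preccurlyeq x\le y$ imply $x\in W$.
   Context: A mixed lattice vector space $(V,\le,\preccurlyeq)$ is a real vector space $V$ with two partial orderings $\le$ (initial order) and $\preccurlyeq$ (specific order), each making $V$ a partially ordered vector space, with positive cones $V_p=\{x:0\le x\}$, $V_{sp}=\{x:0\preccurlyeq x\}$, such that: (1) for all $x,y$ the elements $x\curlyvee y=\min\{w: w\succcurlyeq x,\ w\ge y\}$ and $x\curlywedge y=\max\{w: w\preccurlyeq x,\ w\le y\}$ exist (min/max with respect to $\le$); (2) $x\preccurlyeq y$ implies $x\le y$; (3) $x\curlyvee y, x\curlywedge y\in V_{sp}$ whenever $x,y\in V_{sp}$. For $A\subseteq V$ let $MF_1(A)=\{y\in V: x\preccurlyeq y\le z \text{ for some } x,z\in A\}$ and $MF_2(A)=\{y\in V: x\le y\preccurlyeq z \text{ for some } x,z\in A\}$. A set $A$ is type 1 mixed-full if $A=MF_1(A)$, and type 2 mixed-full if $A=MF_2(A)$. *)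

theory Defs
  imports "HOL-Analysis.Analysis"
begin

definition ordered_vs :: "('a::real_vector \<Rightarrow> 'a \<Rightarrow> bool) \<Rightarrow> bool" where
  "ordered_vs r \<longleftrightarrow>
     (\<forall>x. r x x) \<and> (\<forall>x y. r x y \<and> r y x \<longrightarrow> x = y) \<and>
     (\<forall>x y z. r x y \<and> r y z \<longrightarrow> r x z) \<and>
     (\<forall>x y z. r x y \<longrightarrow> r (x + z) (y + z)) \<and>
     (\<forall>x y (a::real). r x y \<and> 0 \<le> a \<longrightarrow> r (a *\<^sub>R x) (a *\<^sub>R y))"

definition is_mixed_sup :: "('a \<Rightarrow> 'a \<Rightarrow> bool) \<Rightarrow> ('a \<Rightarrow> 'a \<Rightarrow> bool) \<Rightarrow> 'a \<Rightarrow> 'a \<Rightarrow> 'a \<Rightarrow> bool" where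
  "is_mixed_sup le sle x y m \<longleftrightarrow> sle x m \<and> le y m \<and> (\<forall>w. sle x w \<and> le y w \<longrightarrow> le m w)"

definition is_mixed_inf :: "('a \<Rightarrow> 'a \<Rightarrow> bool) \<Rightarrow> ('a \<Rightarrow> 'a \<Rightarrow> bool) \<Rightarrow> 'a \<Rightarrow> 'a \<Rightarrow> 'a \<Rightarrow> bool" where
  "is_mixed_inf le sle x y m \<longleftrightarrow> sle m x \<and> le m y \<and> (\<forall>w. sle w x \<and> le w y \<longrightarrow> le w m)"

definition mixed_sup :: "('a \<Rightarrow> 'a \<Rightarrow> bool) \<Rightarrow> ('a \<Rightarrow> 'a \<Rightarrow> bool) \<Rightarrow> 'a \<Rightarrow> 'a \<Rightarrow> 'a" where
  "mixed_sup le sle x y = (THE m. is_mixed_sup le sle x y m)"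

definition mixed_inf :: "('a \<Rightarrow> 'a \<Rightarrow> bool) \<Rightarrow> ('a \<Rightarrow> 'a \<Rightarrow> bool) \<Rightarrow> 'a \<Rightarrow> 'a \<Rightarrow> 'a" where
  "mixed_inf le sle x y = (THE m. is_mixed_inf le sle x y m)"

text \<open>Mixed lattice vector space: le is the initial order, sle the specific order.\<close>
definition mixed_lattice_vs :: "('a::real_vector \<Rightarrow> 'a \<Rightarrow> bool) \<Rightarrow> ('a \<Rightarrow> 'a \<Rightarrow> bool) \<Rightarrow> bool" where
  "mixed_lattice_vs le sle \<longleftrightarrow>
     ordered_vs le \<and> ordered_vs sle \<and>
     (\<forall>x y. \<exists>m. is_mixed_sup le sle x y m) \<and>
     (\<forall>x y. \<exists>m. is_mixed_inf le sle x y m) \<and>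
     (\<forall>x y. sle x y \<longrightarrow> le x y) \<and>
     (\<forall>x y. sle 0 x \<and> sle 0 y \<longrightarrow> sle 0 (mixed_sup le sle x y) \<and> sle 0 (mixed_inf le sle x y))"

definition MF1 :: "('a \<Rightarrow> 'a \<Rightarrow> bool) \<Rightarrow> ('a \<Rightarrow> 'a \<Rightarrow> bool) \<Rightarrow> 'a set \<Rightarrow> 'a set" where
  "MF1 le sle A = {y. \<exists>x\<in>A. \<exists>z\<in>A. sle x y \<and> le y z}"

definition MF2 :: "('a \<Rightarrow> 'a \<Rightarrow> bool) \<Rightarrow> ('a \<Rightarrow> 'a \<Rightarrow> bool) \<Rightarrow> 'a set \<Rightarrow> 'a set" where
  "MF2 le sle A = {y. \<exists>x\<in>A. \<exists>z\<in>A. le x y \<and> sle y z}"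

definition vector_topology :: "'a::real_vector topology \<Rightarrow> bool" where
  "vector_topology T \<longleftrightarrow> topspace T = UNIV \<and>
     continuous_map (prod_topology T T) T (\<lambda>(x, y). x + y) \<and>
     continuous_map (prod_topology euclideanreal T) T (\<lambda>(a, x). a *\<^sub>R x)"

definition nhd0 :: "'a::real_vector topology \<Rightarrow> 'a set \<Rightarrow> bool" where
  "nhd0 T N \<longleftrightarrow> (\<exists>U. openin T U \<and> 0 \<in> U \<and> U \<subseteq> N)"

end

theory Submission
  imports Defs
begin

text \<open>Both directions of (a)\<open>\<Leftrightarrow>\<close>(b) only use that \<open>\<le>\<close> and \<open>\<preccurlyeq>\<close> are translation-invariant
  preorders; since \<open>MF\<^sub>1\<close> for \<open>(\<le>, \<preccurlyeq>)\<close> is \<open>MF\<^sub>2\<close> for \<open>(\<preccurlyeq>, \<le>)\<close>, the same argument gives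
  (c)\<open>\<Leftrightarrow>\<close>(d). The remaining link (b)\<open>\<Leftrightarrow>\<close>(d) enlarges \<open>W\<close> by all \<open>x\<close> with \<open>0 \<preccurlyeq> x \<le> y\<close>,
  \<open>y \<in> W\<close>: then \<open>0 \<le> y - x \<preccurlyeq> y\<close>, so \<open>y - x \<in> W\<close> and \<open>x = y - (y - x)\<close> stays in \<open>W - W\<close>.
  For (b)\<open>\<Rightarrow>\<close>(a), if \<open>V - V \<subseteq> W\<close> and \<open>V + W \<subseteq> N\<close>, then \<open>MF\<^sub>2(V)\<close> is mixed-full and
  lies in \<open>N\<close>, because \<open>x \<le> y \<preccurlyeq> z\<close> with \<open>x, z \<in> V\<close> gives \<open>0 \<le> y - x \<preccurlyeq> z - x \<in> W\<close>.\<close>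

definition mixed_solid :: "('a::real_vector \<Rightarrow> 'a \<Rightarrow> bool) \<Rightarrow> ('a \<Rightarrow> 'a \<Rightarrow> bool) \<Rightarrow> 'a set \<Rightarrow> bool" where
  "mixed_solid r s W \<longleftrightarrow> (\<forall>x y. y \<in> W \<and> r 0 x \<and> s x y \<longrightarrow> x \<in> W)"

definition nhd0_base :: "'a::real_vector topology \<Rightarrow> ('a set \<Rightarrow> bool) \<Rightarrow> bool" where
  "nhd0_base T P \<longleftrightarrow> (\<forall>N. nhd0 T N \<longrightarrow> (\<exists>W. nhd0 T W \<and> W \<subseteq> N \<and> P W))"

lemma ordered_vs_refl: "ordered_vs r \<Longrightarrow> r x x"
  unfolding ordered_vs_def by blast

lemma ordered_vs_trans: "ordered_vs r \<Longrightarrow> r x y \<Longrightarrow> r y z \<Longrightarrow> r x z"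
  unfolding ordered_vs_def by blast

lemma ordered_vs_add_right: "ordered_vs r \<Longrightarrow> r x y \<Longrightarrow> r (x + w) (y + w)"
  unfolding ordered_vs_def by blast

lemma ordered_vs_diff_right: "ordered_vs r \<Longrightarrow> r x y \<Longrightarrow> r (x - w) (y - w)"
  using ordered_vs_add_right[of r x y "- w"] by simp

lemma ordered_vs_diff_nonneg: "ordered_vs r \<Longrightarrow> r x y \<Longrightarrow> r 0 (y - x)"
  using ordered_vs_diff_right[of r x y x] by simp

lemma ordered_vs_diff_le: "ordered_vs r \<Longrightarrow> r 0 x \<Longrightarrow> r (y - x) y"
  using ordered_vs_diff_right[of r 0 x "x - y"] by simp

lemma MF1_eq_MF2_swap: "MF1 le sle = MF2 sle le"
  unfolding MF1_def MF2_def by (rule ext) blast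

lemma subset_MF2:
  assumes "ordered_vs r" "ordered_vs s"
  shows "A \<subseteq> MF2 r s A"
  unfolding MF2_def using assms by (blast intro: ordered_vs_refl)

lemma MF2_idem:
  assumes r: "ordered_vs r" and s: "ordered_vs s"
  shows "MF2 r s (MF2 r s A) = MF2 r s A"
proof
  show "MF2 r s (MF2 r s A) \<subseteq> MF2 r s A"
  proof
    fix y assume "y \<in> MF2 r s (MF2 r s A)"
    then obtain x z where xz: "x \<in> MF2 r s A" "z \<in> MF2 r s A" "r x y" "s y z"
      unfolding MF2_def by blast
    obtain x' where "x' \<in> A" "r x' x"
      using xz(1) unfolding MF2_def by blast
    moreover obtain z' where "z' \<in> A" "s z z'"
      using xz(2) unfolding MF2_def by blast
    ultimately show "y \<in> MF2 r s A"
      unfolding MF2_def using xz ordered_vs_trans[OF r] ordered_vs_trans[OF s] by blast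
  qed
qed (rule subset_MF2[OF r s])

lemma mixed_solid_if_MF2_fixed:
  assumes "0 \<in> W" and "MF2 r s W = W"
  shows "mixed_solid r s W"
  unfolding mixed_solid_def
proof (intro allI impI)
  fix x y assume "y \<in> W \<and> r 0 x \<and> s x y"
  then have "x \<in> MF2 r s W"
    unfolding MF2_def using \<open>0 \<in> W\<close> by blast
  then show "x \<in> W"
    using \<open>MF2 r s W = W\<close> by simp
qed

lemma zero_in_nhd0: "nhd0 T N \<Longrightarrow> 0 \<in> N"
  unfolding nhd0_def by blast

lemma nhd0_mono: "nhd0 T N \<Longrightarrow> N \<subseteq> M \<Longrightarrow> nhd0 T M"
  unfolding nhd0_def by blast

lemma nhd0_continuous_pair:
  assumes f: "continuous_map (prod_topology T T) T (\<lambda>(x, y). f x y)"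
    and "f 0 0 = 0" and "nhd0 T N"
  obtains V where "nhd0 T V" "\<And>x y. x \<in> V \<Longrightarrow> y \<in> V \<Longrightarrow> f x y \<in> N"
proof -
  obtain U where U: "openin T U" "0 \<in> U" "U \<subseteq> N"
    using \<open>nhd0 T N\<close> unfolding nhd0_def by blast
  let ?O = "{p \<in> topspace (prod_topology T T). (\<lambda>(x, y). f x y) p \<in> U}"
  have "0 \<in> topspace T"
    using U(1,2) openin_subset by blast
  then have "(0, 0) \<in> ?O"
    using U(2) \<open>f 0 0 = 0\<close> by simp
  then have "\<exists>U1 U2. openin T U1 \<and> openin T U2 \<and> 0 \<in> U1 \<and> 0 \<in> U2 \<and> U1 \<times> U2 \<subseteq> ?O"
    using openin_continuous_map_preimage[OF f U(1)] unfolding openin_prod_topology_alt by blast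
  then obtain U1 U2 where U12: "openin T U1" "openin T U2" "0 \<in> U1" "0 \<in> U2" "U1 \<times> U2 \<subseteq> ?O"
    by blast
  show thesis
  proof (rule that)
    have "openin T (U1 \<inter> U2)"
      using U12(1,2) by (rule openin_Int)
    then show "nhd0 T (U1 \<inter> U2)"
      unfolding nhd0_def using U12(3,4) by blast
    show "f x y \<in> N" if "x \<in> U1 \<inter> U2" "y \<in> U1 \<inter> U2" for x y
    proof -
      have "(x, y) \<in> ?O"
        using that U12(5) by blast
      then show ?thesis
        using U(3) by auto
    qed
  qed
qed

lemma continuous_map_vector_diff:
  assumes "vector_topology T"
  shows "continuous_map (prod_topology T T) T (\<lambda>(x, y). x - y)"
proof -
  have add: "continuous_map (prod_topology T T) T (\<lambda>(x, y). x + y)"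
    and scale: "continuous_map (prod_topology euclideanreal T) T (\<lambda>(a, x). a *\<^sub>R x)"
    using assms unfolding vector_topology_def by auto
  have "continuous_map (prod_topology T T) (prod_topology euclideanreal T) (\<lambda>p. (-1, snd p))"
    unfolding continuous_map_pairwise o_def by (simp add: continuous_map_snd)
  from continuous_map_compose[OF this scale]
  have "continuous_map (prod_topology T T) T (\<lambda>p. - snd p)"
    by (simp add: o_def)
  then have "continuous_map (prod_topology T T) (prod_topology T T) (\<lambda>p. (fst p, - snd p))"
    unfolding continuous_map_pairwise o_def by (simp add: continuous_map_fst)
  from continuous_map_compose[OF this add] show ?thesis
    by (simp add: o_def case_prod_unfold)
qed

lemma nhd0_add:
  assumes "vector_topology T" "nhd0 T N"
  obtains V where "nhd0 T V" "\<And>x y. x \<in> V \<Longrightarrow> y \<in> V \<Longrightarrow> x + y \<in> N"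
proof (rule nhd0_continuous_pair[of T "(+)", OF _ _ assms(2)])
  show "continuous_map (prod_topology T T) T (\<lambda>(x, y). x + y)"
    using assms(1) unfolding vector_topology_def by blast
qed (use that in auto)

lemma nhd0_diff:
  assumes "vector_topology T" "nhd0 T N"
  obtains V where "nhd0 T V" "\<And>x y. x \<in> V \<Longrightarrow> y \<in> V \<Longrightarrow> x - y \<in> N"
  by (rule nhd0_continuous_pair[of T "(-)", OF continuous_map_vector_diff[OF assms(1)] _ assms(2)])
    (use that in auto)

lemma nhd0_base_mono:
  assumes "nhd0_base T P" and "\<And>W. nhd0 T W \<Longrightarrow> P W \<Longrightarrow> Q W"
  shows "nhd0_base T Q"
  using assms unfolding nhd0_base_def by blast

lemma MF2_subset_if_mixed_solid:
  assumes r: "ordered_vs r" and s: "ordered_vs s"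
    and solid: "mixed_solid r s W"
    and diff: "\<And>x z. x \<in> V \<Longrightarrow> z \<in> V \<Longrightarrow> z - x \<in> W"
    and add: "\<And>x w. x \<in> V \<Longrightarrow> w \<in> W \<Longrightarrow> x + w \<in> N"
  shows "MF2 r s V \<subseteq> N"
proof
  fix y assume "y \<in> MF2 r s V"
  then obtain x z where "x \<in> V" "z \<in> V" "r x y" "s y z"
    unfolding MF2_def by blast
  then have "r 0 (y - x)" "s (y - x) (z - x)" "z - x \<in> W"
    using ordered_vs_diff_nonneg[OF r] ordered_vs_diff_right[OF s] diff by auto
  then have "y - x \<in> W"
    using solid unfolding mixed_solid_def by blast
  then have "x + (y - x) \<in> N"
    using add[OF \<open>x \<in> V\<close>] by blast
  then show "y \<in> N"
    by simp
qed

lemma nhd0_base_MF2_fixed_iff_mixed_solid: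
  assumes r: "ordered_vs r" and s: "ordered_vs s" and T: "vector_topology T"
  shows "nhd0_base T (\<lambda>W. MF2 r s W = W) \<longleftrightarrow> nhd0_base T (mixed_solid r s)"
proof
  assume "nhd0_base T (\<lambda>W. MF2 r s W = W)"
  then show "nhd0_base T (mixed_solid r s)"
    by (rule nhd0_base_mono) (use zero_in_nhd0 mixed_solid_if_MF2_fixed in blast)
next
  assume solid_base: "nhd0_base T (mixed_solid r s)"
  show "nhd0_base T (\<lambda>W. MF2 r s W = W)"
    unfolding nhd0_base_def
  proof (intro allI impI)
    fix N assume "nhd0 T N"
    then obtain V1 where V1: "nhd0 T V1" "\<And>x y. x \<in> V1 \<Longrightarrow> y \<in> V1 \<Longrightarrow> x + y \<in> N"
      using nhd0_add[OF T] by blast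
    then obtain W where W: "nhd0 T W" "W \<subseteq> V1" "mixed_solid r s W"
      using solid_base unfolding nhd0_base_def by blast
    obtain V where V: "nhd0 T V" "\<And>x y. x \<in> V \<Longrightarrow> y \<in> V \<Longrightarrow> x - y \<in> W"
      using nhd0_diff[OF T W(1)] by blast
    have "V \<subseteq> V1"
      using V(2)[OF _ zero_in_nhd0[OF V(1)]] W(2) by auto
    have "MF2 r s V \<subseteq> N"
    proof (rule MF2_subset_if_mixed_solid[OF r s W(3)])
      show "z - x \<in> W" if "x \<in> V" "z \<in> V" for x z
        using V(2) that by blast
      show "x + w \<in> N" if "x \<in> V" "w \<in> W" for x w
        using V1(2) that \<open>V \<subseteq> V1\<close> W(2) by blast
    qed
    then show "\<exists>W. nhd0 T W \<and> W \<subseteq> N \<and> MF2 r s W = W"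
      using MF2_idem[OF r s] nhd0_mono[OF V(1) subset_MF2[OF r s]] by blast
  qed
qed

lemma nhd0_base_mixed_solid_swap:
  assumes r: "ordered_vs r" and s: "ordered_vs s" and T: "vector_topology T"
    and solid_base: "nhd0_base T (mixed_solid r s)"
  shows "nhd0_base T (mixed_solid s r)"
  unfolding nhd0_base_def
proof (intro allI impI)
  fix N assume "nhd0 T N"
  then obtain V where V: "nhd0 T V" "\<And>x y. x \<in> V \<Longrightarrow> y \<in> V \<Longrightarrow> x - y \<in> N"
    using nhd0_diff[OF T] by blast
  then obtain W where W: "nhd0 T W" "W \<subseteq> V" "mixed_solid r s W"
    using solid_base unfolding nhd0_base_def by blast
  define W' where "W' = W \<union> {x. \<exists>y\<in>W. s 0 x \<and> r x y}"
  have "W' \<subseteq> N"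
  proof
    fix x assume "x \<in> W'"
    then consider "x \<in> W" | y where "y \<in> W" "s 0 x" "r x y"
      unfolding W'_def by blast
    then show "x \<in> N"
    proof cases
      case 1
      then show ?thesis
        using V(2)[OF _ zero_in_nhd0[OF V(1)]] W(2) by auto
    next
      case 2
      have "r 0 (y - x)" "s (y - x) y"
        using ordered_vs_diff_nonneg[OF r 2(3)] ordered_vs_diff_le[OF s 2(2)] .
      with \<open>y \<in> W\<close> have "y - x \<in> W"
        using W(3) unfolding mixed_solid_def by blast
      then have "y - (y - x) \<in> N"
        using V(2) W(2) \<open>y \<in> W\<close> by blast
      then show ?thesis by simp
    qed
  qed
  moreover have "mixed_solid s r W'"
    unfolding mixed_solid_def
  proof (intro allI impI)
    fix x y assume xy: "y \<in> W' \<and> s 0 x \<and> r x y"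
    then consider "y \<in> W" | y' where "y' \<in> W" "r y y'"
      unfolding W'_def by blast
    then show "x \<in> W'"
      by cases (use xy ordered_vs_trans[OF r] in \<open>auto simp: W'_def\<close>)
  qed
  moreover have "nhd0 T W'"
    by (rule nhd0_mono[OF W(1)]) (auto simp: W'_def)
  ultimately show "\<exists>W. nhd0 T W \<and> W \<subseteq> N \<and> mixed_solid s r W"
    by blast
qed

theorem proposition3p6:
  fixes le sle :: "'a::real_vector \<Rightarrow> 'a \<Rightarrow> bool" and T :: "'a topology"
  assumes "mixed_lattice_vs le sle"
    and "vector_topology T"
  shows "((\<forall>N. nhd0 T N \<longrightarrow> (\<exists>W. nhd0 T W \<and> W \<subseteq> N \<and> MF2 le sle W = W)) \<longleftrightarrow>
          (\<forall>N. nhd0 T N \<longrightarrow> (\<exists>W. nhd0 T W \<and> W \<subseteq> N \<and>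
               (\<forall>x y. y \<in> W \<and> le 0 x \<and> sle x y \<longrightarrow> x \<in> W)))) \<and>
         ((\<forall>N. nhd0 T N \<longrightarrow> (\<exists>W. nhd0 T W \<and> W \<subseteq> N \<and>
               (\<forall>x y. y \<in> W \<and> le 0 x \<and> sle x y \<longrightarrow> x \<in> W))) \<longleftrightarrow>
          (\<forall>N. nhd0 T N \<longrightarrow> (\<exists>W. nhd0 T W \<and> W \<subseteq> N \<and> MF1 le sle W = W))) \<and>
         ((\<forall>N. nhd0 T N \<longrightarrow> (\<exists>W. nhd0 T W \<and> W \<subseteq> N \<and> MF1 le sle W = W)) \<longleftrightarrow>
          (\<forall>N. nhd0 T N \<longrightarrow> (\<exists>W. nhd0 T W \<and> W \<subseteq> N \<and>
               (\<forall>x y. y \<in> W \<and> sle 0 x \<and> le x y \<longrightarrow> x \<in> W))))"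
proof -
  have le: "ordered_vs le" and sle: "ordered_vs sle"
    using assms(1) unfolding mixed_lattice_vs_def by auto
  note T = assms(2)
  have "nhd0_base T (\<lambda>W. MF2 le sle W = W) \<longleftrightarrow> nhd0_base T (mixed_solid le sle)"
    by (rule nhd0_base_MF2_fixed_iff_mixed_solid[OF le sle T])
  moreover have "nhd0_base T (mixed_solid le sle) \<longleftrightarrow> nhd0_base T (mixed_solid sle le)"
    using nhd0_base_mixed_solid_swap[OF le sle T] nhd0_base_mixed_solid_swap[OF sle le T] by blast
  moreover have "nhd0_base T (\<lambda>W. MF1 le sle W = W) \<longleftrightarrow> nhd0_base T (mixed_solid sle le)"
    unfolding MF1_eq_MF2_swap by (rule nhd0_base_MF2_fixed_iff_mixed_solid[OF sle le T])
  ultimately show ?thesis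
    unfolding nhd0_base_def mixed_solid_def by blast
qed

end
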